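(* Let $v=(1/N,\dots,1/N)$ be the center of $\Delta$. Then $v$ is a linearly stable equilibrium if $\alpha<(N-1)/(N-2)$, and a linearly unstable equilibrium if $\alpha>(N-1)/(N-2)$.
   Context: Let $N\ge3$, $\alpha>1$, and $A_{i,j}=1-\delta_{i,j}$ for $i,j\le N$. Let $\Delta=\{v\in\mathbb R_+^N:\sum_iv_i=1,\ v_i\le3/4\ \forall i\}$. For $v$ with nonnegative coordinates let $v^\alpha=(v_i^\alpha)_i$, $H(v)=\sum_{i\neq j}v_i^\alpha v_j^\alpha$, $\pi_i(v)=v_i^\alpha(Av^\alpha)_i/H(v)$, and on $\Delta$ let $F(v)=-v+\pi(v)$. An equilibrium is $v\in\Delta$ with $F(v)=0$. With $DF(v)$ the differential at $v$ of $v\mapsto-v+\pi(v)$ acting on $\{x:\sum_ix_i=0\}$, an equilibrium is linearly stable if all eigenvalues of $DF(v)$ have negative real parts and linearly unstable if some eigenvalue has positive real part. *)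

theory Defs
  imports "HOL-Analysis.Analysis"
begin

text \<open>Vectors in R^N are modelled as real^'n with N = CARD('n).\<close>

definition Amat :: "real^'n^'n" where
  "Amat = (\<chi> i j. if i = j then 0 else 1)"

definition vpow :: "real \<Rightarrow> real^'n \<Rightarrow> real^'n" where
  "vpow \<alpha> v = (\<chi> i. v$i powr \<alpha>)"

definition Hf :: "real \<Rightarrow> real^'n \<Rightarrow> real" where
  "Hf \<alpha> v = (\<Sum>i\<in>UNIV. \<Sum>j\<in>UNIV - {i}. (v$i powr \<alpha>) * (v$j powr \<alpha>))"

definition piF :: "real \<Rightarrow> real^'n \<Rightarrow> real^'n" where
  "piF \<alpha> v = (\<chi> i. (v$i powr \<alpha>) * (Amat *v vpow \<alpha> v)$i / Hf \<alpha> v)"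

definition Fv :: "real \<Rightarrow> real^'n \<Rightarrow> real^'n" where
  "Fv \<alpha> v = - v + piF \<alpha> v"

definition Simplex :: "(real^'n) set" where
  "Simplex = {v. (\<forall>i. 0 \<le> v$i \<and> v$i \<le> 3/4) \<and> (\<Sum>i\<in>UNIV. v$i) = 1}"

definition equilibrium :: "real \<Rightarrow> real^'n \<Rightarrow> bool" where
  "equilibrium \<alpha> v \<longleftrightarrow> v \<in> Simplex \<and> Fv \<alpha> v = 0"

definition sumzero :: "(real^'n) set" where
  "sumzero = {x. (\<Sum>i\<in>UNIV. x$i) = 0}"

text \<open>Complex eigenvalue of a real linear map L acting on a subspace W:
  there is a nonzero complex eigenvector x + i y with x, y in W, i.e.
  L(x + i y) = \<mu> (x + i y) for the complexification of L.\<close>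
definition eigenvalue_on :: "(real^'n \<Rightarrow> real^'n) \<Rightarrow> (real^'n) set \<Rightarrow> complex \<Rightarrow> bool" where
  "eigenvalue_on L W \<mu> \<longleftrightarrow>
     (\<exists>x\<in>W. \<exists>y\<in>W. (x \<noteq> 0 \<or> y \<noteq> 0) \<and>
        L x = Re \<mu> *\<^sub>R x - Im \<mu> *\<^sub>R y \<and> L y = Im \<mu> *\<^sub>R x + Re \<mu> *\<^sub>R y)"

definition linearly_stable :: "real \<Rightarrow> real^'n \<Rightarrow> bool" where
  "linearly_stable \<alpha> v \<longleftrightarrow> equilibrium \<alpha> v \<and>
     (\<exists>D. (Fv \<alpha> has_derivative D) (at v) \<and>
          (\<forall>\<mu>. eigenvalue_on D sumzero \<mu> \<longrightarrow> Re \<mu> < 0))"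

definition linearly_unstable :: "real \<Rightarrow> real^'n \<Rightarrow> bool" where
  "linearly_unstable \<alpha> v \<longleftrightarrow> equilibrium \<alpha> v \<and>
     (\<exists>D. (Fv \<alpha> has_derivative D) (at v) \<and>
          (\<exists>\<mu>. eigenvalue_on D sumzero \<mu> \<and> Re \<mu> > 0))"

end

theory Submission
  imports Defs
begin

text \<open>Write \<open>F(v) = -v + share(v\<^sup>\<alpha>)\<close> with \<open>share(w)\<^sub>i = w\<^sub>i (Aw)\<^sub>i / \<langle>w, Aw\<rangle>\<close>.
  At the centre \<open>c = (1/N, \<dots>, 1/N)\<close> the map \<open>v \<mapsto> v\<^sup>\<alpha>\<close> has differential \<open>r \<cdot> id\<close>
  with \<open>r = \<alpha> N q\<close>, and it sends \<open>c\<close> to the constant vector \<open>w = (q, \<dots>, q)\<close>, \<open>q = N powr -\<alpha>\<close>.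
  On the hyperplane \<open>\<Sum>\<^sub>i h\<^sub>i = 0\<close> we have \<open>(Ah)\<^sub>i = -h\<^sub>i\<close>, so the variation of \<open>\<langle>w, Aw\<rangle>\<close>
  vanishes and the differential of \<open>share\<close> at \<open>w\<close> is the scalar \<open>(N-2)/(N(N-1)q)\<close>.
  Hence \<open>DF(c)\<close> acts on the hyperplane as the scalar \<open>\<alpha>(N-2)/(N-1) - 1\<close>, which is therefore
  its only eigenvalue; its sign changes at \<open>\<alpha> = (N-1)/(N-2)\<close>.\<close>

lemma has_derivative_vecI:
  fixes f :: "'a::real_normed_vector \<Rightarrow> real^'n"
  assumes "\<And>i. ((\<lambda>x. f x $ i) has_derivative (\<lambda>h. f' h $ i)) (at a within S)"
  shows "(f has_derivative f') (at a within S)"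
proof (rule has_derivative_componentwise_within[THEN iffD2], rule ballI)
  fix b :: "real^'n"
  assume "b \<in> Basis"
  then obtain k where "b = axis k 1"
    unfolding Basis_vec_def by auto
  then show "((\<lambda>x. f x \<bullet> b) has_derivative (\<lambda>h. f' h \<bullet> b)) (at a within S)"
    using assms[of k] by (simp add: inner_axis)
qed

lemma eigenvalue_on_scalar_map_iff:
  assumes L: "\<And>x. x \<in> W \<Longrightarrow> L x = c *\<^sub>R x" and "0 \<in> W"
  shows "eigenvalue_on L W \<mu> \<longleftrightarrow> \<mu> = complex_of_real c \<and> (\<exists>x\<in>W. x \<noteq> 0)"
proof
  assume "eigenvalue_on L W \<mu>"
  then obtain x y where xy: "x \<in> W" "y \<in> W" "x \<noteq> 0 \<or> y \<noteq> 0"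
    and Lx: "L x = Re \<mu> *\<^sub>R x - Im \<mu> *\<^sub>R y" and Ly: "L y = Im \<mu> *\<^sub>R x + Re \<mu> *\<^sub>R y"
    unfolding eigenvalue_on_def by blast
  define d b where "d = c - Re \<mu>" and "b = Im \<mu>"
  have dx: "d *\<^sub>R x = - b *\<^sub>R y" and dy: "d *\<^sub>R y = b *\<^sub>R x"
    using Lx Ly L xy by (simp_all add: d_def b_def algebra_simps)
  have bx: "b *\<^sub>R x = d *\<^sub>R y" and by': "b *\<^sub>R y = - d *\<^sub>R x"
    using dx dy by simp_all
  have "(d * d + b * b) *\<^sub>R x = d *\<^sub>R (d *\<^sub>R x) + b *\<^sub>R (b *\<^sub>R x)"
    by (simp add: algebra_simps)
  also have "\<dots> = 0"
    by (simp only: dx bx) (simp add: algebra_simps)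
  finally have "(d * d + b * b) *\<^sub>R x = 0" .
  moreover have "(d * d + b * b) *\<^sub>R y = d *\<^sub>R (d *\<^sub>R y) + b *\<^sub>R (b *\<^sub>R y)"
    by (simp add: algebra_simps)
  moreover have "\<dots> = 0"
    by (simp only: dy by') (simp add: algebra_simps)
  ultimately have "d * d + b * b = 0"
    using xy(3) by auto
  then have "d = 0" "b = 0"
    by simp_all
  then show "\<mu> = complex_of_real c \<and> (\<exists>x\<in>W. x \<noteq> 0)"
    using xy by (auto simp: d_def b_def complex_eq_iff)
next
  assume "\<mu> = complex_of_real c \<and> (\<exists>x\<in>W. x \<noteq> 0)"
  then show "eigenvalue_on L W \<mu>"
    unfolding eigenvalue_on_def using L \<open>0 \<in> W\<close> by force
qed

lemma sumzero_nontrivial: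
  assumes "CARD('n) \<ge> 2"
  shows "\<exists>x::real^'n \<in> sumzero. x \<noteq> 0"
proof -
  obtain i j :: 'n where "i \<noteq> j"
    using assms by (meson card_2_iff' ex_card)
  define x :: "real^'n" where "x = axis i 1 - axis j 1"
  have "x $ i = 1"
    using \<open>i \<noteq> j\<close> by (simp add: x_def axis_def)
  moreover have "x \<in> sumzero"
    by (simp add: x_def sumzero_def sum_subtractf axis_def)
  ultimately show ?thesis
    by (metis zero_index zero_neq_one)
qed

lemma Amat_mult_vec_nth: "(Amat *v w) $ i = (\<Sum>j\<in>UNIV. w $ j) - w $ i"
  for w :: "real^'n"
proof -
  have "(Amat *v w) $ i = (\<Sum>j\<in>UNIV. w $ j - (if j = i then w $ j else 0))"
    unfolding Amat_def matrix_vector_mult_def vec_lambda_beta by (intro sum.cong) auto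
  then show ?thesis
    by (simp add: sum_subtractf)
qed

definition share :: "real^'n \<Rightarrow> real^'n" where
  "share w = (\<chi> i. w $ i * (Amat *v w) $ i / (w \<bullet> (Amat *v w)))"

definition share_deriv :: "real^'n \<Rightarrow> real^'n \<Rightarrow> real^'n" where
  "share_deriv w h = (\<chi> i.
     ((w $ i * (Amat *v h) $ i + h $ i * (Amat *v w) $ i) * (w \<bullet> (Amat *v w))
      - w $ i * (Amat *v w) $ i * (w \<bullet> (Amat *v h) + h \<bullet> (Amat *v w)))
     / ((w \<bullet> (Amat *v w)) * (w \<bullet> (Amat *v w))))"

lemma Fv_eq_share_vpow: "Fv a v = - v + share (vpow a v)"
proof -
  have "Hf a v = vpow a v \<bullet> (Amat *v vpow a v)"
    by (simp add: Hf_def inner_vec_def Amat_mult_vec_nth vpow_def sum_diff1 sum_distrib_left right_diff_distrib)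
  then show ?thesis
    by (simp add: Fv_def piF_def share_def) (simp add: vpow_def)
qed

lemma has_derivative_vpow:
  assumes "\<And>j. 0 < v $ j"
  shows "(vpow a has_derivative (\<lambda>h. \<chi> j. a * v $ j powr (a - 1) * h $ j)) (at v)"
proof (rule has_derivative_vecI)
  fix j
  have "((\<lambda>x. x $ j powr a) has_derivative (\<lambda>h. a * v $ j powr (a - 1) * h $ j)) (at v)"
    using has_derivative_compose[OF bounded_linear_imp_has_derivative[OF bounded_linear_vec_nth]
        has_real_derivative_powr[OF assms, unfolded has_field_derivative_def]]
    by (simp add: mult.commute)
  then show "((\<lambda>x. vpow a x $ j) has_derivative (\<lambda>h. (\<chi> j. a * v $ j powr (a - 1) * h $ j) $ j)) (at v)"
    by (simp add: vpow_def)
qed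

lemma has_derivative_share:
  assumes "w \<bullet> (Amat *v w) \<noteq> 0"
  shows "(share has_derivative share_deriv w) (at w)"
proof (rule has_derivative_vecI)
  fix i
  have A: "((\<lambda>w. Amat *v w) has_derivative (\<lambda>h. Amat *v h)) (at w)"
    by (rule bounded_linear_imp_has_derivative) simp
  have Ai: "((\<lambda>w. (Amat *v w) $ i) has_derivative (\<lambda>h. (Amat *v h) $ i)) (at w)"
    by (rule bounded_linear.has_derivative[OF bounded_linear_vec_nth A])
  show "((\<lambda>w. share w $ i) has_derivative (\<lambda>h. share_deriv w h $ i)) (at w)"
    unfolding share_def share_deriv_def vec_lambda_beta
    by (intro has_derivative_divide' has_derivative_mult has_derivative_inner A Ai
        bounded_linear_imp_has_derivative[OF bounded_linear_vec_nth] has_derivative_ident assms)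
qed

lemma Amat_mult_const: "Amat *v (\<chi> _::'n::finite. q) = (\<chi> _. (real CARD('n) - 1) * q)"
  by (simp add: vec_eq_iff Amat_mult_vec_nth algebra_simps)

lemma inner_Amat_const:
  "(\<chi> _::'n::finite. q) \<bullet> (Amat *v (\<chi> _. q)) = real CARD('n) * (real CARD('n) - 1) * q * q"
  by (simp add: Amat_mult_const inner_vec_def)

lemma share_const:
  assumes "CARD('n) \<ge> 2" and "q \<noteq> 0"
  shows "share (\<chi> _::'n::finite. q) = (\<chi> _. 1 / real CARD('n))"
  using assms unfolding share_def inner_Amat_const by (simp add: vec_eq_iff Amat_mult_const)

lemma share_deriv_const:
  fixes q :: real
  assumes "CARD('n) \<ge> 2" and "q \<noteq> 0" and "h \<in> sumzero"
  shows "share_deriv (\<chi> _::'n::finite. q) h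
    = ((real CARD('n) - 2) / (real CARD('n) * (real CARD('n) - 1) * q)) *\<^sub>R h"
proof -
  define n where "n = real CARD('n)"
  define P where "P = n * (n - 1) * q * q"
  have nz: "n \<noteq> 0" "n - 1 \<noteq> 0" "q \<noteq> 0"
    using assms(1,2) by (simp_all add: n_def)
  then have "P \<noteq> 0"
    by (simp add: P_def)
  have "(\<Sum>i\<in>UNIV. h $ i) = 0"
    using assms(3) by (simp add: sumzero_def)
  then have Ah: "Amat *v h = - h"
    by (simp add: vec_eq_iff Amat_mult_vec_nth)
  have zeros: "(\<chi> _::'n. q) \<bullet> (Amat *v h) = 0" "h \<bullet> (Amat *v (\<chi> _. q)) = 0"
    using \<open>(\<Sum>i\<in>UNIV. h $ i) = 0\<close>
    by (simp_all add: Ah Amat_mult_const inner_vec_def sum_negf flip: sum_distrib_left sum_distrib_right)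
  have "share_deriv (\<chi> _::'n. q) h $ i = (n - 2) / (n * (n - 1) * q) * h $ i" for i
  proof -
    have "share_deriv (\<chi> _::'n. q) h $ i
        = ((q * (Amat *v h) $ i + h $ i * ((n - 1) * q)) * P - q * ((n - 1) * q) * 0) / (P * P)"
      using zeros unfolding share_deriv_def inner_Amat_const by (simp add: Amat_mult_const P_def n_def)
    also have "\<dots> = (n - 2) * q * h $ i * P / (P * P)"
      by (simp add: Ah algebra_simps)
    also have "\<dots> = (n - 2) / (n * (n - 1) * q) * h $ i"
      using \<open>P \<noteq> 0\<close> nz by (simp add: P_def)
    finally show ?thesis .
  qed
  then show ?thesis
    by (simp add: vec_eq_iff n_def)
qed

lemma vpow_const: "vpow a (\<chi> _. u) = (\<chi> _. u powr a)"
  by (simp add: vpow_def)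

lemma equilibrium_center:
  assumes "CARD('n) \<ge> 2"
  shows "equilibrium a (\<chi> _::'n::finite. 1 / real CARD('n))"
proof -
  have "(\<chi> _::'n. 1 / real CARD('n)) \<in> Simplex"
    using assms by (simp add: Simplex_def field_simps)
  moreover have "share (vpow a (\<chi> _::'n. 1 / real CARD('n))) = (\<chi> _. 1 / real CARD('n))"
    using assms by (simp add: vpow_const share_const)
  ultimately show ?thesis
    by (simp add: equilibrium_def Fv_eq_share_vpow)
qed

lemma Fv_derivative_at_center:
  assumes "CARD('n) \<ge> 2"
  obtains D where "(Fv a has_derivative D) (at (\<chi> _::'n::finite. 1 / real CARD('n)))"
    and "\<And>h. h \<in> sumzero \<Longrightarrow> D h = (a * (real CARD('n) - 2) / (real CARD('n) - 1) - 1) *\<^sub>R h"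
proof -
  define n where "n = real CARD('n)"
  define c :: "real^'n" where "c = (\<chi> _. 1 / n)"
  define q where "q = (1 / n) powr a"
  define r where "r = a * (1 / n) powr (a - 1)"
  have "n \<ge> 2"
    using assms by (simp add: n_def)
  then have "q > 0" and r: "r = a * n * q"
    by (simp_all add: q_def r_def powr_diff)
  have "(vpow a has_derivative (\<lambda>h. \<chi> j. a * c $ j powr (a - 1) * h $ j)) (at c)"
    using \<open>n \<ge> 2\<close> by (intro has_derivative_vpow) (simp add: c_def)
  moreover have "(\<lambda>h. \<chi> j. a * c $ j powr (a - 1) * h $ j) = (\<lambda>h. r *\<^sub>R h)"
    by (simp add: fun_eq_iff vec_eq_iff c_def r_def)
  moreover have "(share has_derivative share_deriv (\<chi> _. q)) (at (vpow a c))"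
    using assms \<open>q > 0\<close> by (simp add: c_def q_def vpow_const has_derivative_share inner_Amat_const n_def)
  ultimately have "((\<lambda>v. - v + share (vpow a v)) has_derivative (\<lambda>h. - h + share_deriv (\<chi> _. q) (r *\<^sub>R h))) (at c)"
    by (intro has_derivative_add has_derivative_minus has_derivative_ident) (auto intro: has_derivative_compose)
  then have "(Fv a has_derivative (\<lambda>h. - h + share_deriv (\<chi> _. q) (r *\<^sub>R h))) (at c)"
    by (simp add: Fv_eq_share_vpow[abs_def])
  moreover have "- h + share_deriv (\<chi> _::'n. q) (r *\<^sub>R h) = (a * (n - 2) / (n - 1) - 1) *\<^sub>R h"
    if "h \<in> sumzero" for h
  proof -
    have "r *\<^sub>R h \<in> sumzero"
      using that by (simp add: sumzero_def flip: sum_distrib_left)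
    then have "share_deriv (\<chi> _::'n. q) (r *\<^sub>R h) = ((n - 2) / (n * (n - 1) * q) * r) *\<^sub>R h"
      using share_deriv_const[OF assms] \<open>q > 0\<close> by (simp add: n_def)
    moreover have "(n - 2) / (n * (n - 1) * q) * r = a * (n - 2) / (n - 1)"
      using \<open>q > 0\<close> \<open>n \<ge> 2\<close> by (simp add: r)
    ultimately show ?thesis
      by (simp add: algebra_simps)
  qed
  ultimately show ?thesis
    using that by (simp add: c_def n_def)
qed

theorem lemma4p1:
  fixes \<alpha> :: real and c :: "real^'n"
  assumes "CARD('n) \<ge> 3" and "\<alpha> > 1"
    and "c = (\<chi> i. 1 / real CARD('n))"
  shows "(\<alpha> < (real CARD('n) - 1) / (real CARD('n) - 2) \<longrightarrow> linearly_stable \<alpha> c) \<and>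
         (\<alpha> > (real CARD('n) - 1) / (real CARD('n) - 2) \<longrightarrow> linearly_unstable \<alpha> c)"
proof -
  define n where "n = real CARD('n)"
  define \<kappa> where "\<kappa> = \<alpha> * (n - 2) / (n - 1) - 1"
  have N2: "CARD('n) \<ge> 2" and "n \<ge> 3"
    using assms(1) by (simp_all add: n_def)
  obtain D where D: "(Fv \<alpha> has_derivative D) (at c)" and scalar: "\<And>h. h \<in> sumzero \<Longrightarrow> D h = \<kappa> *\<^sub>R h"
    using Fv_derivative_at_center[OF N2, of \<alpha>] by (auto simp: assms(3) \<kappa>_def n_def)
  have "equilibrium \<alpha> c"
    using equilibrium_center[OF N2] by (simp add: assms(3))
  moreover have "eigenvalue_on D sumzero \<mu> \<longleftrightarrow> \<mu> = complex_of_real \<kappa>" for \<mu>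
    using eigenvalue_on_scalar_map_iff[of sumzero D \<kappa>, OF scalar] sumzero_nontrivial[OF N2]
    by (simp add: sumzero_def)
  moreover have "\<kappa> < 0 \<longleftrightarrow> \<alpha> < (n - 1) / (n - 2)" and "\<kappa> > 0 \<longleftrightarrow> \<alpha> > (n - 1) / (n - 2)"
    using \<open>n \<ge> 3\<close> by (simp_all add: \<kappa>_def field_simps)
  ultimately show ?thesis
    unfolding linearly_stable_def linearly_unstable_def n_def[symmetric] using D by auto
qed

end
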